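(* Let $s\ge1$ and $0\le k\le s$. Then $E(s,k)=\sum_{m=k}^{s}(-1)^{m+k}\binom{m}{k}O(s,m)$.
   Context: A $p$-string of length $s$ is a correctly matched string of $s$ pairs of parentheses; there are $C_s=\frac{1}{s+1}\binom{2s}{s}$ of them ($C_0=1$). Given $p$-strings $U$ (upper), $W$ (lower) of length $s$, the meander graph $\Gamma^1_{2s-1}$ is obtained by marking points $0,1,\dots,2s$ on the $x$-axis, taking the segment $[0,2s]$, joining points $a,b$ by an upper semicircle for each matched pair of $U$ at positions $a<b$ (positions $1,\dots,2s$), and points $a-1,b-1$ by a lower semicircle for each matched pair of $W$ at positions $a<b$; the vertices are $1,\dots,2s-1$. A pierced circle at position $i$ ($1\le i\le 2s-2$) is present if vertices $i,i+1$ are joined both by an upper and a lower semicircle. $E(s,k)$ is the number of pairs $(U,W)$ whose meander graph has exactly $k$ pierced circles. $O(s,k)=\binom{2s-k-1}{k}(C_{s-k})^2$, which equals the number of triples $(A,P,Q)$ where $A$ is a placement of $k$ pairwise vertex-disjoint pierced circles on the path graph with $2s-1$ vertices and $P,Q$ are $p$-strings of length $s-k$. *)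

theory Defs
  imports Main
begin

text \<open>A parenthesis string is a list of booleans: True = open, False = close.\<close>

definition depth :: "bool list \<Rightarrow> int" where
  "depth xs = sum_list (map (\<lambda>b. if b then 1 else -1) xs)"

definition balanced :: "bool list \<Rightarrow> bool" where
  "balanced xs \<longleftrightarrow> depth xs = 0 \<and> (\<forall>n\<le>length xs. depth (take n xs) \<ge> 0)"

definition pstring :: "nat \<Rightarrow> bool list \<Rightarrow> bool" where
  "pstring s xs \<longleftrightarrow> length xs = 2 * s \<and> balanced xs"

text \<open>Positions a < b (1-based) form a matched pair: '(' at a, ')' at b,
  and the substring strictly between them is balanced.\<close>
definition matched :: "bool list \<Rightarrow> nat \<Rightarrow> nat \<Rightarrow> bool" where
  "matched xs a b \<longleftrightarrow> 1 \<le> a \<and> a < b \<and> b \<le> length xs \<and> xs ! (a - 1) \<and> \<not> xs ! (b - 1)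
     \<and> balanced (take (b - 1 - a) (drop a xs))"

text \<open>Upper semicircle joining points a, b: matched pair (a,b) of U.
  Lower semicircle joining points a, b: matched pair (a+1,b+1) of W.\<close>
definition upper_arc :: "bool list \<Rightarrow> nat \<Rightarrow> nat \<Rightarrow> bool" where
  "upper_arc U a b \<longleftrightarrow> matched U a b"

definition lower_arc :: "bool list \<Rightarrow> nat \<Rightarrow> nat \<Rightarrow> bool" where
  "lower_arc W a b \<longleftrightarrow> matched W (a + 1) (b + 1)"

definition pierced :: "bool list \<Rightarrow> bool list \<Rightarrow> nat \<Rightarrow> bool" where
  "pierced U W i \<longleftrightarrow> upper_arc U i (i + 1) \<and> lower_arc W i (i + 1)"

definition num_pierced :: "nat \<Rightarrow> bool list \<Rightarrow> bool list \<Rightarrow> nat" where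
  "num_pierced s U W = card {i. 1 \<le> i \<and> i \<le> 2 * s - 2 \<and> pierced U W i}"

definition Enum :: "nat \<Rightarrow> nat \<Rightarrow> nat" where
  "Enum s k = card {(U, W). pstring s U \<and> pstring s W \<and> num_pierced s U W = k}"

definition catalan :: "nat \<Rightarrow> nat" where
  "catalan n = (2 * n choose n) div (n + 1)"

definition Onum :: "nat \<Rightarrow> nat \<Rightarrow> nat" where
  "Onum s k = (2 * s - k - 1 choose k) * (catalan (s - k))^2"

end

theory Submission
  imports Defs
begin

text \<open>Cutting off the last letter of \<open>U\<close> and the first letter of \<open>W\<close>, which are forced, and
  reading the rest column by column turns a pair of p-strings of length \<open>s\<close> into a word of
  length \<open>2s - 1\<close> over \<open>bool \<times> bool\<close> whose upper row is a nonnegative path from height 0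
  to 1 and whose lower row one from 1 to 0; a pierced circle becomes a factor
  \<open>(open, open) (close, close)\<close>. In both rows such a factor is an up-step followed by a
  down-step, so it can be deleted or inserted anywhere without affecting the path conditions.
  Hence words with \<open>m\<close> marked circles correspond to admissible words of length
  \<open>2(s - m) - 1\<close>, of which there are \<open>C(s - m)\<^sup>2\<close>, together with the positions of the
  \<open>m\<close> circles among \<open>2s - m - 1\<close> letters, so that the sum over all pairs of
  \<open>(number of circles choose m)\<close> is \<open>O(s, m)\<close>. Binomial inversion then yields \<open>E(s, k)\<close>.\<close>

section \<open>P-strings as nonnegative lattice paths\<close>

definition height_step :: "bool \<Rightarrow> int" where
  "height_step b = (if b then 1 else -1)"

fun nonneg_path :: "int \<Rightarrow> int \<Rightarrow> bool list \<Rightarrow> bool" where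
  "nonneg_path h t [] \<longleftrightarrow> 0 \<le> h \<and> h = t"
| "nonneg_path h t (b # xs) \<longleftrightarrow> 0 \<le> h \<and> nonneg_path (h + height_step b) t xs"

lemma nonneg_path_start_nonneg: "nonneg_path h t xs \<Longrightarrow> 0 \<le> h"
  by (cases xs) auto

lemma nonneg_path_end_nonneg: "nonneg_path h t xs \<Longrightarrow> 0 \<le> t"
  by (induction xs arbitrary: h) auto

lemma nonneg_path_snoc:
  "nonneg_path h t (xs @ [b]) \<longleftrightarrow> nonneg_path h (t - height_step b) xs \<and> 0 \<le> t"
  by (induction xs arbitrary: h) (auto simp: height_step_def)

lemma nonneg_path_length: "nonneg_path h t xs \<Longrightarrow> h - t \<le> int (length xs)"
  by (induction xs arbitrary: h) (fastforce simp: height_step_def split: if_splits)+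

lemma depth_Nil [simp]: "depth [] = 0"
  by (simp add: depth_def)

lemma depth_Cons: "depth (b # xs) = height_step b + depth xs"
  by (simp add: depth_def height_step_def)

lemma nonneg_path_iff_depth:
  "nonneg_path h t xs \<longleftrightarrow> (\<forall>n\<le>length xs. 0 \<le> h + depth (take n xs)) \<and> h + depth xs = t"
proof (induction xs arbitrary: h)
  case Nil
  then show ?case by simp
next
  case (Cons b xs)
  have "(\<forall>n\<le>length (b # xs). 0 \<le> h + depth (take n (b # xs))) \<longleftrightarrow>
        0 \<le> h \<and> (\<forall>n\<le>length xs. 0 \<le> h + height_step b + depth (take n xs))"
    by (simp add: All_less_Suc2 depth_Cons add.assoc flip: less_Suc_eq_le)
  then show ?case
    using Cons.IH[of "h + height_step b"] by (auto simp: depth_Cons algebra_simps)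
qed

lemma pstring_iff_nonneg_path: "pstring s xs \<longleftrightarrow> length xs = 2 * s \<and> nonneg_path 0 0 xs"
  by (auto simp: pstring_def balanced_def nonneg_path_iff_depth)


definition ground_paths :: "nat \<Rightarrow> nat \<Rightarrow> bool list set" where
  "ground_paths n h = {xs. length xs = n \<and> nonneg_path (int h) 0 xs}"

definition pstrings :: "nat \<Rightarrow> bool list set" where
  "pstrings s = {xs. pstring s xs}"

lemma pstrings_eq_ground_paths: "pstrings s = ground_paths (2 * s) 0"
  by (auto simp: pstrings_def ground_paths_def pstring_iff_nonneg_path)

lemma finite_ground_paths: "finite (ground_paths n h)"
  by (rule finite_subset[OF _ finite_lists_length_eq[of UNIV n]]) (auto simp: ground_paths_def)

lemma ground_paths_Suc_0: "ground_paths (Suc n) 0 = Cons True ` ground_paths n 1"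
proof (rule set_eqI)
  fix xs
  show "xs \<in> ground_paths (Suc n) 0 \<longleftrightarrow> xs \<in> Cons True ` ground_paths n 1"
    using nonneg_path_start_nonneg[of "-1" 0]
    by (cases xs) (auto simp: ground_paths_def height_step_def)
qed

lemma ground_paths_Suc_Suc:
  "ground_paths (Suc n) (Suc h) = Cons True ` ground_paths n (h + 2) \<union> Cons False ` ground_paths n h"
proof (rule set_eqI)
  fix xs
  show "xs \<in> ground_paths (Suc n) (Suc h) \<longleftrightarrow>
        xs \<in> Cons True ` ground_paths n (h + 2) \<union> Cons False ` ground_paths n h"
    by (cases xs) (auto simp: ground_paths_def height_step_def add.assoc)
qed

lemma card_ground_paths_Suc_Suc:
  "card (ground_paths (Suc n) (Suc h)) = card (ground_paths n (h + 2)) + card (ground_paths n h)"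
  unfolding ground_paths_Suc_Suc
  by (subst card_Un_disjoint) (auto simp: finite_ground_paths card_image)

lemma ground_paths_too_short: "n < h \<Longrightarrow> ground_paths n h = {}"
  using nonneg_path_length by (fastforce simp: ground_paths_def)

lemma card_ground_paths_same: "card (ground_paths h h) = 1"
proof (induction h)
  case 0
  have "ground_paths 0 0 = {[]}" by (auto simp: ground_paths_def)
  then show ?case by simp
next
  case (Suc h)
  then show ?case by (simp add: card_ground_paths_Suc_Suc ground_paths_too_short)
qed

text \<open>The ballot numbers, in subtraction-free form: a path from height \<open>h\<close> down to \<open>0\<close>
  with \<open>u\<close> up-steps is counted by \<open>(2u+h choose u) - (2u+h choose u+h+1)\<close>.\<close>

lemma card_ground_paths:
  "card (ground_paths (2 * u + h) h) + (2 * u + h choose (u + h + 1)) = 2 * u + h choose u"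
proof (induction u arbitrary: h)
  case 0
  then show ?case by (simp add: card_ground_paths_same)
next
  case (Suc u)
  note outer_IH = Suc.IH
  show ?case
  proof (induction h)
    case 0
    have "ground_paths (2 * Suc u) 0 = Cons True ` ground_paths (2 * u + 1) 1"
      using ground_paths_Suc_0[of "2 * u + 1"] by simp
    then have "card (ground_paths (2 * Suc u) 0) = card (ground_paths (2 * u + 1) 1)"
      by (simp add: card_image)
    then show ?case using outer_IH[of 1] by simp
  next
    case (Suc h)
    have "card (ground_paths (2 * Suc u + Suc h) (Suc h))
        = card (ground_paths (2 * u + (h + 2)) (h + 2)) + card (ground_paths (2 * Suc u + h) h)"
      using card_ground_paths_Suc_Suc[of "2 * u + h + 2" h] by (simp add: algebra_simps)
    then show ?case
      using Suc.IH outer_IH[of "h + 2"] by (simp add: algebra_simps)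
  qed
qed

lemma card_pstrings: "card (pstrings s) = catalan s"
proof (cases s)
  case 0
  have "pstrings 0 = {[]}" by (auto simp: pstrings_def pstring_def balanced_def)
  then show ?thesis using 0 by (simp add: catalan_def)
next
  case (Suc t)
  let ?c = "card (pstrings s)"
  have ballot: "?c + (2 * s choose Suc s) = 2 * s choose s"
    using card_ground_paths[of s 0] by (simp add: pstrings_eq_ground_paths)
  have "Suc (s + t) = 2 * s" using Suc by simp
  then have absorb: "Suc s * (2 * s choose Suc s) = s * (2 * s choose s)"
    using Suc_times_binomial_add[of s t] Suc by metis
  from ballot have "(?c + (2 * s choose Suc s)) * Suc s = (2 * s choose s) * Suc s"
    by simp
  then have "?c * Suc s = 2 * s choose s"
    using absorb by (simp add: algebra_simps)
  then show ?thesis by (metis catalan_def Suc_eq_plus1 nonzero_mult_div_cancel_right nat.distinct(1))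
qed


section \<open>Column words, their circles and markings\<close>

type_synonym column = "bool \<times> bool"

abbreviation both_open :: column where "both_open \<equiv> (True, True)"
abbreviation both_close :: column where "both_close \<equiv> (False, False)"

fun circles :: "column list \<Rightarrow> nat" where
  "circles (a # b # w) = (if a = both_open \<and> b = both_close then 1 else 0) + circles (b # w)"
| "circles _ = 0"

lemma circles_both_close_Cons: "circles (both_close # w) = circles w"
  by (cases w) auto

lemma double_circles_le_length: "2 * circles w \<le> length w"
  by (induction w rule: induct_list012) (auto simp: circles_both_close_Cons)

lemma circles_less: "length w < 2 * s \<Longrightarrow> circles w < s"
  using double_circles_le_length[of w] by linarith

definition circle_positions :: "column list \<Rightarrow> nat set" where
  "circle_positions w = {j. Suc j < length w \<and> w ! j = both_open \<and> w ! Suc j = both_close}"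

lemma card_circle_positions: "card (circle_positions w) = circles w"
proof (induction w rule: circles.induct)
  case (1 a b w)
  let ?head = "if a = both_open \<and> b = both_close then {0} else {}"
  have "circle_positions (a # b # w) = ?head \<union> Suc ` circle_positions (b # w)"
  proof (rule set_eqI)
    fix j
    show "j \<in> circle_positions (a # b # w) \<longleftrightarrow> j \<in> ?head \<union> Suc ` circle_positions (b # w)"
      by (cases j) (auto simp: circle_positions_def)
  qed
  moreover have "finite (circle_positions (b # w))"
    by (rule finite_subset[of _ "{..<length (b # w)}"]) (auto simp: circle_positions_def)
  ultimately show ?case
    using 1 by (simp add: card_Un_disjoint card_image)
qed (auto simp: circle_positions_def)

definition admissible :: "column list \<Rightarrow> bool" where
  "admissible z \<longleftrightarrow> nonneg_path 0 1 (map fst z) \<and> nonneg_path 1 0 (map snd z)"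

definition admissible_words :: "nat \<Rightarrow> column list set" where
  "admissible_words n = {z. length z = n \<and> admissible z}"

lemma finite_admissible_words: "finite (admissible_words n)"
  by (rule finite_subset[OF _ finite_lists_length_eq[of UNIV n]]) (auto simp: admissible_words_def)

text \<open>A word with marked circles is encoded by replacing each marked factor
  \<open>both_open both_close\<close> by \<open>None\<close> and wrapping every other letter in \<open>Some\<close>.\<close>

fun expand :: "column option list \<Rightarrow> column list" where
  "expand [] = []"
| "expand (None # v) = both_open # both_close # expand v"
| "expand (Some a # v) = a # expand v"

fun erase :: "column option list \<Rightarrow> column list" where
  "erase [] = []"
| "erase (None # v) = erase v"
| "erase (Some a # v) = a # erase v"

lemma length_expand: "length (expand v) = length (erase v) + 2 * count_list v None"
  by (induction v rule: expand.induct) auto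

lemma length_erase: "length v = length (erase v) + count_list v None"
  by (induction v rule: erase.induct) auto

definition markings :: "column list \<Rightarrow> nat \<Rightarrow> column option list set" where
  "markings w m = {v. expand v = w \<and> count_list v None = m}"

definition insertions :: "column list \<Rightarrow> nat \<Rightarrow> column option list set" where
  "insertions u m = {v. erase v = u \<and> count_list v None = m}"

lemma finite_markings: "finite (markings w m)"
proof (rule finite_subset[OF _ finite_lists_length_le[of UNIV "length w"]])
  show "markings w m \<subseteq> {v. set v \<subseteq> UNIV \<and> length v \<le> length w}"
    using length_expand length_erase by (fastforce simp: markings_def)
qed simp

lemma finite_insertions: "finite (insertions u m)"
proof (rule finite_subset[OF _ finite_lists_length_eq[of UNIV "length u + m"]])
  show "insertions u m \<subseteq> {v. set v \<subseteq> UNIV \<and> length v = length u + m}"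
    using length_erase by (fastforce simp: insertions_def)
qed simp

lemma expand_eq_Nil_iff [simp]: "expand v = [] \<longleftrightarrow> v = []"
  by (cases v rule: expand.cases) auto

lemma markings_Nil: "markings [] m = (if m = 0 then {[]} else {})"
  by (auto simp: markings_def)

lemma markings_Cons:
  "markings (a # w) m = Cons (Some a) ` markings w m \<union>
     (if a = both_open \<and> w \<noteq> [] \<and> hd w = both_close \<and> 0 < m
      then Cons None ` markings (tl w) (m - 1) else {})"
proof (rule set_eqI)
  fix v
  show "v \<in> markings (a # w) m \<longleftrightarrow> v \<in> Cons (Some a) ` markings w m \<union>
     (if a = both_open \<and> w \<noteq> [] \<and> hd w = both_close \<and> 0 < m
      then Cons None ` markings (tl w) (m - 1) else {})"
    by (cases v rule: expand.cases; cases w) (auto simp: markings_def)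
qed

lemma card_markings: "card (markings w m) = circles w choose m"
proof (induction w arbitrary: m rule: circles.induct)
  case (1 a b w)
  show ?case
  proof (cases "a = both_open \<and> b = both_close")
    case True
    then have [simp]: "a = both_open" "b = both_close" by auto
    have drop_close: "markings (both_close # w) m' = Cons (Some both_close) ` markings w m'" for m'
      by (simp add: markings_Cons)
    have IH: "card (markings w m') = circles w choose m'" for m'
      using "1"[of m'] by (simp add: drop_close card_image circles_both_close_Cons)
    show ?thesis
    proof (cases m)
      case 0
      then show ?thesis using IH by (simp add: markings_Cons drop_close card_image)
    next
      case (Suc m')
      have "markings (a # b # w) m = Cons (Some a) ` markings (b # w) m \<union> Cons None ` markings w m'"
        using Suc by (simp add: markings_Cons)
      also have "card \<dots> = card (markings w m) + card (markings w m')"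
        by (subst card_Un_disjoint) (auto simp: finite_markings card_image drop_close)
      finally show ?thesis
        using IH Suc by (simp add: circles_both_close_Cons)
    qed
  next
    case False
    have "markings (a # b # w) m = Cons (Some a) ` markings (b # w) m"
      by (subst markings_Cons) (use False in auto)
    moreover have "circles (a # b # w) = circles (b # w)"
      using False by simp
    ultimately show ?thesis using "1" by (simp add: card_image)
  qed
qed (simp_all add: markings_Cons markings_Nil card_image)

lemma insertions_Nil: "insertions [] m = {replicate m None}"
proof -
  have "erase v = [] \<Longrightarrow> v = replicate (count_list v None) None" for v
    by (induction v rule: erase.induct) (auto simp flip: Suc_eq_plus1)
  moreover have "erase (replicate m None) = []" "count_list (replicate m None) None = m"
    by (induction m) auto
  ultimately show ?thesis by (auto simp: insertions_def)
qed

lemma insertions_Cons_0: "insertions (a # u) 0 = Cons (Some a) ` insertions u 0"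
proof (rule set_eqI)
  fix v
  show "v \<in> insertions (a # u) 0 \<longleftrightarrow> v \<in> Cons (Some a) ` insertions u 0"
    by (cases v rule: erase.cases) (auto simp: insertions_def)
qed

lemma insertions_Cons_Suc:
  "insertions (a # u) (Suc m) = Cons (Some a) ` insertions u (Suc m) \<union> Cons None ` insertions (a # u) m"
proof (rule set_eqI)
  fix v
  show "v \<in> insertions (a # u) (Suc m) \<longleftrightarrow>
        v \<in> Cons (Some a) ` insertions u (Suc m) \<union> Cons None ` insertions (a # u) m"
    by (cases v rule: erase.cases) (auto simp: insertions_def)
qed

lemma card_insertions: "card (insertions u m) = length u + m choose m"
proof (induction u arbitrary: m)
  case Nil
  then show ?case by (simp add: insertions_Nil)
next
  case (Cons a u)
  show ?case
  proof (induction m)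
    case 0
    then show ?case using Cons.IH[of 0] by (simp add: insertions_Cons_0 card_image)
  next
    case (Suc m)
    then show ?case
      using Cons.IH[of "Suc m"]
      by (subst insertions_Cons_Suc, subst card_Un_disjoint) (auto simp: finite_insertions card_image)
  qed
qed

lemma nonneg_path_up_down: "nonneg_path h t (True # False # xs) \<longleftrightarrow> nonneg_path h t xs"
  using nonneg_path_start_nonneg[of h t xs] by (auto simp: height_step_def)

lemma nonneg_path_map_expand:
  assumes "f both_open" "\<not> f both_close"
  shows "nonneg_path h t (map f (expand v)) \<longleftrightarrow> nonneg_path h t (map f (erase v))"
  using assms
proof (induction v arbitrary: h rule: expand.induct)
  case (2 v)
  then show ?case by (simp add: nonneg_path_up_down del: nonneg_path.simps(2))
qed simp_all

lemma admissible_expand: "admissible (expand v) \<longleftrightarrow> admissible (erase v)"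
  by (simp add: admissible_def nonneg_path_map_expand)

text \<open>Both sides count the admissible words of length \<open>n\<close> with \<open>m\<close> marked circles.\<close>

lemma sum_choose_circles:
  assumes "2 * m \<le> n"
  shows "(\<Sum>w\<in>admissible_words n. circles w choose m)
       = card (admissible_words (n - 2 * m)) * (n - m choose m)"
proof -
  have "(\<Sum>w\<in>admissible_words n. circles w choose m) = (\<Sum>w\<in>admissible_words n. card (markings w m))"
    by (simp add: card_markings)
  also have "\<dots> = card (\<Union>w\<in>admissible_words n. markings w m)"
    by (intro card_UN_disjoint[symmetric] finite_admissible_words finite_markings ballI)
      (auto simp: markings_def)
  also have "(\<Union>w\<in>admissible_words n. markings w m) = (\<Union>u\<in>admissible_words (n - 2 * m). insertions u m)"
    using assms
    by (auto simp: admissible_words_def markings_def insertions_def length_expand admissible_expand)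
  also have "card \<dots> = (\<Sum>u\<in>admissible_words (n - 2 * m). card (insertions u m))"
    by (intro card_UN_disjoint finite_admissible_words finite_insertions ballI) (auto simp: insertions_def)
  also have "\<dots> = card (admissible_words (n - 2 * m)) * (n - m choose m)"
    using assms by (simp add: card_insertions admissible_words_def)
  finally show ?thesis .
qed


section \<open>Pairs of p-strings as column words\<close>

text \<open>The last letter of \<open>U\<close> is a closing and the first letter of \<open>W\<close> an opening
  parenthesis; the remaining \<open>2s - 1\<close> letters are read column by column, so that
  column \<open>j\<close> holds \<open>U ! j\<close> above \<open>W ! (j + 1)\<close>.\<close>

definition columns :: "bool list \<times> bool list \<Rightarrow> column list" where
  "columns p = zip (butlast (fst p)) (tl (snd p))"

lemma pstring_butlast:
  assumes "pstring s U" "1 \<le> s"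
  shows "U = butlast U @ [False]" "nonneg_path 0 1 (butlast U)"
proof -
  have "U \<noteq> []"
    using assms by (auto simp: pstring_def)
  then have U: "U = butlast U @ [last U]"
    by simp
  then have "nonneg_path 0 (- height_step (last U)) (butlast U)"
    using assms(1) nonneg_path_snoc[of 0 0 "butlast U" "last U"] by (simp add: pstring_iff_nonneg_path)
  moreover from this have "\<not> last U"
    using nonneg_path_end_nonneg by (fastforce simp: height_step_def)
  ultimately show "U = butlast U @ [False]" "nonneg_path 0 1 (butlast U)"
    using U by (simp_all add: height_step_def)
qed

lemma pstring_tl:
  assumes "pstring s W" "1 \<le> s"
  shows "W = True # tl W" "nonneg_path 1 0 (tl W)"
proof -
  have W: "W = hd W # tl W"
    using assms by (cases W) (auto simp: pstring_def)
  then have "nonneg_path (height_step (hd W)) 0 (tl W)"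
    using assms(1) by (metis add_0 nonneg_path.simps(2) pstring_iff_nonneg_path)
  moreover from this have "hd W"
    using nonneg_path_start_nonneg by (fastforce simp: height_step_def)
  ultimately show "W = True # tl W" "nonneg_path 1 0 (tl W)"
    using W by (simp_all add: height_step_def)
qed

lemma bij_betw_columns:
  assumes "1 \<le> s"
  shows "bij_betw columns (pstrings s \<times> pstrings s) (admissible_words (2 * s - 1))"
proof (rule bij_betw_byWitness[where f' = "\<lambda>z. (map fst z @ [False], True # map snd z)"])
  show "\<forall>p\<in>pstrings s \<times> pstrings s. (map fst (columns p) @ [False], True # map snd (columns p)) = p"
    using pstring_butlast[OF _ assms] pstring_tl[OF _ assms]
    by (auto simp: pstrings_def columns_def pstring_def)
  show "\<forall>z\<in>admissible_words (2 * s - 1). columns (map fst z @ [False], True # map snd z) = z"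
    by (simp add: columns_def zip_map_fst_snd)
  show "columns ` (pstrings s \<times> pstrings s) \<subseteq> admissible_words (2 * s - 1)"
    using pstring_butlast(2)[OF _ assms] pstring_tl(2)[OF _ assms]
    by (auto simp: pstrings_def columns_def admissible_words_def admissible_def pstring_def)
  show "(\<lambda>z. (map fst z @ [False], True # map snd z)) ` admissible_words (2 * s - 1) \<subseteq> pstrings s \<times> pstrings s"
    using assms
    by (auto simp: pstrings_def pstring_iff_nonneg_path admissible_words_def admissible_def
        nonneg_path_snoc height_step_def)
qed

lemma card_admissible_words:
  assumes "1 \<le> t"
  shows "card (admissible_words (2 * t - 1)) = catalan t ^ 2"
  using bij_betw_same_card[OF bij_betw_columns[OF assms]]
  by (simp add: card_cartesian_product card_pstrings power2_eq_square)

lemma matched_Suc: "matched xs a (Suc a) \<longleftrightarrow> 1 \<le> a \<and> Suc a \<le> length xs \<and> xs ! (a - 1) \<and> \<not> xs ! a"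
  by (auto simp: matched_def balanced_def)

lemma num_pierced_eq_circles:
  assumes "length U = 2 * s" "length W = 2 * s"
  shows "num_pierced s U W = circles (columns (U, W))"
proof -
  have "{i. 1 \<le> i \<and> i \<le> 2 * s - 2 \<and> pierced U W i} = Suc ` circle_positions (columns (U, W))"
  proof (rule set_eqI)
    fix i
    show "i \<in> {i. 1 \<le> i \<and> i \<le> 2 * s - 2 \<and> pierced U W i} \<longleftrightarrow> i \<in> Suc ` circle_positions (columns (U, W))"
      using assms
      by (cases i) (auto simp: pierced_def upper_arc_def lower_arc_def matched_Suc
          circle_positions_def columns_def nth_butlast nth_tl)
  qed
  then show ?thesis
    by (simp add: num_pierced_def card_image card_circle_positions)
qed

lemma Enum_eq_card_circles:
  assumes "1 \<le> s"
  shows "Enum s k = card {z \<in> admissible_words (2 * s - 1). circles z = k}"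
proof -
  have bij: "bij_betw columns (pstrings s \<times> pstrings s) (admissible_words (2 * s - 1))"
    using bij_betw_columns[OF assms] .
  have pairs: "{(U, W). pstring s U \<and> pstring s W \<and> num_pierced s U W = k}
      = {p \<in> pstrings s \<times> pstrings s. circles (columns p) = k}"
    by (auto simp: pstrings_def pstring_def num_pierced_eq_circles)
  have "card {p \<in> pstrings s \<times> pstrings s. circles (columns p) = k}
      = card (columns ` {p \<in> pstrings s \<times> pstrings s. circles (columns p) = k})"
    by (intro card_image[symmetric] inj_on_subset[OF bij_betw_imp_inj_on[OF bij]]) auto
  also have "columns ` {p \<in> pstrings s \<times> pstrings s. circles (columns p) = k}
      = {z \<in> admissible_words (2 * s - 1). circles z = k}"
    using bij_betw_imp_surj_on[OF bij] by auto
  finally show ?thesis by (simp add: Enum_def pairs)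
qed

lemma sum_choose_circles_eq_Onum:
  assumes "1 \<le> s" "m \<le> s"
  shows "(\<Sum>z\<in>admissible_words (2 * s - 1). circles z choose m) = Onum s m"
proof (cases "m = s")
  case True
  have "(\<Sum>z\<in>admissible_words (2 * s - 1). circles z choose m) = 0"
  proof (rule sum.neutral, rule ballI)
    fix z
    assume "z \<in> admissible_words (2 * s - 1)"
    then show "circles z choose m = 0"
      using circles_less[of z s] True assms(1) by (simp add: admissible_words_def)
  qed
  moreover have "Onum s m = 0"
    using True assms by (simp add: Onum_def)
  ultimately show ?thesis by simp
next
  case False
  then have "2 * s - 1 - 2 * m = 2 * (s - m) - 1" "1 \<le> s - m"
    using assms by auto
  then show ?thesis
    using sum_choose_circles[of m "2 * s - 1"] card_admissible_words[of "s - m"] assms False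
    by (simp add: Onum_def)
qed


section \<open>Binomial inversion\<close>

lemma sum_alternating_choose_choose:
  assumes "j \<le> s"
  shows "(\<Sum>m = k..s. (-1) ^ (m + k) * int (m choose k) * int (j choose m)) = (if j = k then 1 else 0)"
proof (cases "k \<le> j")
  case False
  have "(\<Sum>m = k..s. (-1) ^ (m + k) * int (m choose k) * int (j choose m)) = 0"
    by (rule sum.neutral) (use False in simp)
  then show ?thesis
    using False by simp
next
  case True
  have "(\<Sum>m = k..s. (-1) ^ (m + k) * int (m choose k) * int (j choose m))
      = (\<Sum>m = k..j. (-1) ^ (m + k) * int (m choose k) * int (j choose m))"
    using assms by (intro sum.mono_neutral_right) auto
  also have "\<dots> = (\<Sum>m = k..j. int (j choose k) * ((-1) ^ (m - k) * int (j - k choose (m - k))))"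
  proof (rule sum.cong)
    fix m
    assume m: "m \<in> {k..j}"
    then have "(j choose m) * (m choose k) = (j choose k) * (j - k choose (m - k))"
      by (intro choose_mult) auto
    moreover have "(-1 :: int) ^ (m + k) = (-1) ^ (m - k)"
      using m by (simp add: neg_one_power_add_eq_neg_one_power_diff)
    ultimately show "(-1) ^ (m + k) * int (m choose k) * int (j choose m)
        = int (j choose k) * ((-1) ^ (m - k) * int (j - k choose (m - k)))"
      by (simp add: algebra_simps flip: of_nat_mult)
  qed simp
  also have "\<dots> = int (j choose k) * (\<Sum>m = k..j. (-1) ^ (m - k) * int (j - k choose (m - k)))"
    by (simp add: sum_distrib_left)
  also have "(\<Sum>m = k..j. (-1) ^ (m - k) * int (j - k choose (m - k)))
      = (\<Sum>i\<le>j - k. (-1) ^ i * int (j - k choose i))"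
    using True by (intro sum.reindex_bij_witness[of _ "\<lambda>i. i + k" "\<lambda>m. m - k"]) auto
  also have "int (j choose k) * (\<Sum>i\<le>j - k. (-1) ^ i * int (j - k choose i)) = (if j = k then 1 else 0)"
    using True choose_alternating_sum[of "j - k", where 'a = int] by auto
  finally show ?thesis .
qed

lemma card_eq_alternating_sum_choose:
  assumes "finite A" "\<And>x. x \<in> A \<Longrightarrow> f x \<le> s"
  shows "int (card {x \<in> A. f x = k})
       = (\<Sum>m = k..s. (-1) ^ (m + k) * int (m choose k) * int (\<Sum>x\<in>A. f x choose m))"
proof -
  have "int (card {x \<in> A. f x = k}) = (\<Sum>x\<in>A. if f x = k then 1 else 0)"
    using assms(1) by (simp add: sum.If_cases Int_def)
  also have "\<dots> = (\<Sum>x\<in>A. \<Sum>m = k..s. (-1) ^ (m + k) * int (m choose k) * int (f x choose m))"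
    using assms(2) by (simp add: sum_alternating_choose_choose)
  also have "\<dots> = (\<Sum>m = k..s. (-1) ^ (m + k) * int (m choose k) * int (\<Sum>x\<in>A. f x choose m))"
    by (subst sum.swap) (simp add: sum_distrib_left)
  finally show ?thesis .
qed

theorem lemma3p4:
  fixes s k :: nat
  assumes "1 \<le> s" and "k \<le> s"
  shows "int (Enum s k) = (\<Sum>m = k..s. (-1) ^ (m + k) * int (m choose k) * int (Onum s m))"
proof -
  let ?A = "admissible_words (2 * s - 1)"
  have circles_le: "circles z \<le> s" if "z \<in> ?A" for z
    using that assms(1) circles_less[of z s] by (simp add: admissible_words_def)
  have "int (Enum s k) = int (card {z \<in> ?A. circles z = k})"
    using Enum_eq_card_circles[OF assms(1)] by simp
  also have "\<dots> = (\<Sum>m = k..s. (-1) ^ (m + k) * int (m choose k) * int (\<Sum>z\<in>?A. circles z choose m))"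
    by (intro card_eq_alternating_sum_choose finite_admissible_words circles_le)
  also have "\<dots> = (\<Sum>m = k..s. (-1) ^ (m + k) * int (m choose k) * int (Onum s m))"
    using sum_choose_circles_eq_Onum[OF assms(1)] by (intro sum.cong) (simp_all del: of_nat_sum)
  finally show ?thesis .
qed

end
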